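(* Let $b,n$ be positive integers, $c$ a nonnegative integer, and $a_2,\dots,a_n$ integers. With $\mathbf a=(0,0,a_2,\dots,a_n,-\sum_{j=2}^n a_j)$ and $\tilde{\mathbf a}=(0,a_2,\dots,a_n,-\sum_{j=2}^n a_j)$, $$K_{k^{1,b,c}_{n+2}}(\mathbf a)=K_{k^{c+1,b,c}_{n+1}}(\tilde{\mathbf a}).$$
   Context: For a positive integer $m$ and nonnegative integers $a,b,c$, $k_{m+2}^{a,b,c}$ is the directed multigraph on vertex set $\{0,1,\dots,m+1\}$ with edge $(0,i)$ of multiplicity $a$ and edge $(i,m+1)$ of multiplicity $b$ for each $i\in[m]$, and edge $(i,j)$ of multiplicity $c$ for $1\le i<j\le m$; edges $(i,j)$ are oriented $i\to j$. For such a graph $G$ on $\{0,\dots,m+1\}$ and a vector $\mathbf v=(v_0,\dots,v_{m+1})$ with $\sum v_i=0$, $K_G(\mathbf v)$ is the number of $f\in\mathbb Z_{\ge0}^{E(G)}$ such that the net flow (outgoing minus incoming) at each vertex $u$ equals $v_u$. (Here $k^{1,b,c}_{n+2}$ has vertices $0,\dots,n+1$ and $k^{c+1,b,c}_{n+1}$ has vertices $0,\dots,n$.) *)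

theory Defs
  imports Main
begin

(* A directed multigraph on vertex set {0..N} with edges oriented i -> j for i < j is
   given by a multiplicity function mult i j.  Its edges are the triples (i, j, k)
   with i < j <= N and k < mult i j (k distinguishes parallel copies). *)
definition mg_edges :: "nat \<Rightarrow> (nat \<Rightarrow> nat \<Rightarrow> nat) \<Rightarrow> (nat \<times> nat \<times> nat) set" where
  "mg_edges N mult = {(i, j, k). i < j \<and> j \<le> N \<and> k < mult i j}"

definition net_flow :: "nat \<Rightarrow> (nat \<Rightarrow> nat \<Rightarrow> nat) \<Rightarrow> (nat \<times> nat \<times> nat \<Rightarrow> nat) \<Rightarrow> nat \<Rightarrow> int" where
  "net_flow N mult f u =
     int (\<Sum>e\<in>{e \<in> mg_edges N mult. fst e = u}. f e)
   - int (\<Sum>e\<in>{e \<in> mg_edges N mult. fst (snd e) = u}. f e)"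

definition kostant :: "nat \<Rightarrow> (nat \<Rightarrow> nat \<Rightarrow> nat) \<Rightarrow> (nat \<Rightarrow> int) \<Rightarrow> nat" where
  "kostant N mult v = card {f :: nat \<times> nat \<times> nat \<Rightarrow> nat.
      (\<forall>e. e \<notin> mg_edges N mult \<longrightarrow> f e = 0) \<and>
      (\<forall>u \<le> N. net_flow N mult f u = v u)}"

(* multiplicities of k_{m+2}^{a,b,c} on vertices {0..m+1} *)
definition k_mult :: "nat \<Rightarrow> nat \<Rightarrow> nat \<Rightarrow> nat \<Rightarrow> nat \<Rightarrow> nat \<Rightarrow> nat" where
  "k_mult m a b c i j =
     (if i = 0 \<and> 1 \<le> j \<and> j \<le> m then a
      else if 1 \<le> i \<and> i \<le> m \<and> j = m + 1 then b
      else if 1 \<le> i \<and> i < j \<and> j \<le> m then c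
      else 0)"

definition K_k :: "nat \<Rightarrow> nat \<Rightarrow> nat \<Rightarrow> nat \<Rightarrow> (nat \<Rightarrow> int) \<Rightarrow> nat" where
  "K_k m a b c v = kostant (m + 1) (k_mult m a b c) v"

end

theory Submission
  imports Defs
begin

(* Vertex 0 of a graph k_{m+2}^{a,b,c} receives no flow, and in k^{1,b,c}_{n+2} vertex 1 receives
   flow only from vertex 0. Zero net flow at these vertices therefore forces every edge leaving
   them to carry zero flow, in k^{1,b,c}_{n+2} at vertices 0 and 1 and in k^{c+1,b,c}_{n+1} at
   vertex 0. Deleting these edges leaves the same multigraph in both cases once the vertices of
   the first graph are relabelled u -> u - 1, and the demand vectors correspond under the same
   relabelling. *)

lemma finite_mg_edges: "finite (mg_edges N mult)"
proof (rule finite_subset)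
  show "mg_edges N mult \<subseteq> (SIGMA i:{..N}. SIGMA j:{..N}. {..<mult i j})"
    by (auto simp: mg_edges_def)
qed auto

lemma net_flow_supported_subgraph:
  assumes "mg_edges N mult' \<subseteq> mg_edges N mult"
    and "\<And>e. e \<notin> mg_edges N mult' \<Longrightarrow> f e = 0"
  shows "net_flow N mult f u = net_flow N mult' f u"
proof -
  have "(\<Sum>e\<in>{e \<in> mg_edges N mult. P e}. f e) = (\<Sum>e\<in>{e \<in> mg_edges N mult'. P e}. f e)" for P
    using assms by (intro sum.mono_neutral_right) (simp add: finite_mg_edges, blast, blast)
  then show ?thesis
    by (simp add: net_flow_def)
qed

lemma flow_vanishes_below:
  assumes supp: "\<And>e. e \<notin> mg_edges N mult \<Longrightarrow> f e = 0"
    and balanced: "\<And>u. u < s \<Longrightarrow> u \<le> N \<Longrightarrow> net_flow N mult f u = 0"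
    and "fst e < s"
  shows "f e = 0"
  using balanced \<open>fst e < s\<close>
proof (induction s arbitrary: e)
  case (Suc t)
  consider "fst e < t" | "e \<notin> mg_edges N mult" | "fst e = t" "e \<in> mg_edges N mult"
    using Suc.prems(2) by linarith
  then show ?case
  proof cases
    case 3
    then have "t \<le> N" by (auto simp: mg_edges_def)
    then have "net_flow N mult f t = 0" using Suc.prems(1) by simp
    moreover have "(\<Sum>e\<in>{e \<in> mg_edges N mult. fst (snd e) = t}. f e) = 0"
      using Suc by (intro sum.neutral) (auto simp: mg_edges_def)
    ultimately have "(\<Sum>e\<in>{e \<in> mg_edges N mult. fst e = t}. f e) = 0"
      unfolding net_flow_def by linarith
    then have "\<forall>e\<in>{e \<in> mg_edges N mult. fst e = t}. f e = 0"
      by (simp add: finite_mg_edges)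
    then show ?thesis using 3 by blast
  qed (use Suc supp in auto)
qed simp

lemma kostant_drop_low_tails:
  assumes "\<And>u. u < s \<Longrightarrow> v u = 0"
  shows "kostant N mult v = kostant N (\<lambda>i j. if s \<le> i then mult i j else 0) v"
proof -
  let ?mult' = "\<lambda>i j. if s \<le> i then mult i j else 0"
  have edges: "mg_edges N ?mult' = {e \<in> mg_edges N mult. s \<le> fst e}"
    by (auto simp: mg_edges_def split: if_splits)
  then have sub: "mg_edges N ?mult' \<subseteq> mg_edges N mult"
    by blast
  have "(\<forall>e. e \<notin> mg_edges N mult \<longrightarrow> f e = 0) \<and> (\<forall>u \<le> N. net_flow N mult f u = v u)
    \<longleftrightarrow> (\<forall>e. e \<notin> mg_edges N ?mult' \<longrightarrow> f e = 0) \<and> (\<forall>u \<le> N. net_flow N ?mult' f u = v u)"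
    (is "?flow \<longleftrightarrow> ?flow'") for f
  proof
    assume flow: ?flow
    have low: "f e = 0" if "fst e < s" for e
    proof (rule flow_vanishes_below[of N mult f s])
      show "net_flow N mult f u = 0" if "u < s" "u \<le> N" for u
        using flow assms that by simp
    qed (use flow that in blast)+
    have supp': "\<forall>e. e \<notin> mg_edges N ?mult' \<longrightarrow> f e = 0"
      using flow low unfolding edges by (metis (mono_tags) mem_Collect_eq not_le)
    then have "net_flow N mult f u = net_flow N ?mult' f u" for u
      using net_flow_supported_subgraph[OF sub] by blast
    with flow supp' show ?flow'
      by simp
  next
    assume flow': ?flow'
    then have "net_flow N mult f u = net_flow N ?mult' f u" for u
      using net_flow_supported_subgraph[OF sub] by blast
    with flow' sub show ?flow
      by (simp, blast)
  qed
  then show ?thesis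
    by (simp add: kostant_def)
qed

definition shift_edge :: "nat \<times> nat \<times> nat \<Rightarrow> nat \<times> nat \<times> nat" where
  "shift_edge = map_prod Suc (map_prod Suc id)"

lemma inj_shift_edge: "inj shift_edge"
  by (auto simp: inj_def shift_edge_def)

lemma mg_edges_shift:
  assumes "\<And>j. mult 0 j = 0"
  shows "mg_edges (Suc N) mult = shift_edge ` mg_edges N (\<lambda>i j. mult (Suc i) (Suc j))"
proof
  show "mg_edges (Suc N) mult \<subseteq> shift_edge ` mg_edges N (\<lambda>i j. mult (Suc i) (Suc j))"
  proof
    fix e assume e: "e \<in> mg_edges (Suc N) mult"
    obtain i j k where ijk: "e = (i, j, k)"
      by (cases e)
    with e assms have "0 < i"
      by (auto simp: mg_edges_def intro!: gr0I)
    with e ijk show "e \<in> shift_edge ` mg_edges N (\<lambda>i j. mult (Suc i) (Suc j))"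
      by (intro image_eqI[of _ _ "(i - 1, j - 1, k)"]) (auto simp: shift_edge_def mg_edges_def)
  qed
qed (auto simp: shift_edge_def mg_edges_def)

lemma net_flow_shift:
  assumes "\<And>j. mult 0 j = 0"
  shows "net_flow (Suc N) mult f (Suc u)
       = net_flow N (\<lambda>i j. mult (Suc i) (Suc j)) (f \<circ> shift_edge) u"
proof -
  let ?E' = "mg_edges N (\<lambda>i j. mult (Suc i) (Suc j))"
  have "(\<Sum>e\<in>{e \<in> mg_edges (Suc N) mult. P e}. f e)
      = (\<Sum>e\<in>{e \<in> ?E'. P (shift_edge e)}. f (shift_edge e))" for P
  proof -
    have "{e \<in> mg_edges (Suc N) mult. P e} = shift_edge ` {e \<in> ?E'. P (shift_edge e)}"
      unfolding mg_edges_shift[of mult, OF assms] by blast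
    then show ?thesis
      using inj_shift_edge by (simp add: sum.reindex inj_on_subset)
  qed
  then show ?thesis
    by (simp add: net_flow_def shift_edge_def)
qed

lemma net_flow_at_isolated_0:
  assumes "\<And>j. mult 0 j = 0"
  shows "net_flow N mult f 0 = 0"
proof -
  have no_edges: "{e \<in> mg_edges N mult. fst e = 0} = {}"
    "{e \<in> mg_edges N mult. fst (snd e) = 0} = {}"
    using assms by (auto simp: mg_edges_def intro!: gr0I)
  then show ?thesis
    unfolding net_flow_def no_edges by simp
qed

lemma kostant_shift:
  assumes no_out: "\<And>j. mult 0 j = 0" and "v 0 = 0"
  shows "kostant (Suc N) mult v = kostant N (\<lambda>i j. mult (Suc i) (Suc j)) (\<lambda>u. v (Suc u))"
proof -
  let ?mult' = "\<lambda>i j. mult (Suc i) (Suc j)"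
  define S where "S = {f. (\<forall>e. e \<notin> mg_edges (Suc N) mult \<longrightarrow> f e = 0)
    \<and> (\<forall>u \<le> Suc N. net_flow (Suc N) mult f u = v u)}"
  define S' where "S' = {g. (\<forall>e. e \<notin> mg_edges N ?mult' \<longrightarrow> g e = 0)
    \<and> (\<forall>u \<le> N. net_flow N ?mult' g u = v (Suc u))}"
  define unshift :: "(nat \<times> nat \<times> nat \<Rightarrow> nat) \<Rightarrow> nat \<times> nat \<times> nat \<Rightarrow> nat" where
    "unshift g e = (if e \<in> range shift_edge then g (inv shift_edge e) else 0)" for g e
  have edges: "mg_edges (Suc N) mult = shift_edge ` mg_edges N ?mult'"
    using mg_edges_shift[of mult, OF no_out] .
  have shift_in_edges: "shift_edge e \<in> mg_edges (Suc N) mult \<longleftrightarrow> e \<in> mg_edges N ?mult'" for e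
    unfolding edges using inj_shift_edge by (simp add: inj_image_mem_iff)
  have unshift_shift: "unshift g \<circ> shift_edge = g" for g
    using inj_shift_edge by (simp add: unshift_def fun_eq_iff)
  have "bij_betw (\<lambda>f. f \<circ> shift_edge) S S'"
  proof (rule bij_betw_byWitness[where f' = unshift])
    show "\<forall>f\<in>S. unshift (f \<circ> shift_edge) = f"
    proof (intro ballI ext)
      fix f e assume "f \<in> S"
      show "unshift (f \<circ> shift_edge) e = f e"
      proof (cases "e \<in> range shift_edge")
        case True
        then show ?thesis
          by (simp add: unshift_def f_inv_into_f)
      next
        case False
        then have "e \<notin> mg_edges (Suc N) mult"
          using edges by blast
        then have "f e = 0"
          using \<open>f \<in> S\<close> unfolding S_def by blast
        with False show ?thesis
          by (simp add: unshift_def)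
      qed
    qed
    show "\<forall>g\<in>S'. unshift g \<circ> shift_edge = g"
      using unshift_shift by blast
    show "(\<lambda>f. f \<circ> shift_edge) ` S \<subseteq> S'"
    proof (rule image_subsetI)
      fix f assume "f \<in> S"
      then have "\<And>e. e \<notin> mg_edges (Suc N) mult \<Longrightarrow> f e = 0"
        and "\<And>u. u \<le> Suc N \<Longrightarrow> net_flow (Suc N) mult f u = v u"
        unfolding S_def by blast+
      then show "f \<circ> shift_edge \<in> S'"
        by (simp add: S'_def shift_in_edges net_flow_shift[of mult, OF no_out, symmetric])
    qed
    show "unshift ` S' \<subseteq> S"
    proof
      fix f assume "f \<in> unshift ` S'"
      then obtain g where g: "g \<in> S'" and f: "f = unshift g"
        by blast
      have "net_flow (Suc N) mult f u = v u" if "u \<le> Suc N" for u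
      proof (cases u)
        case 0
        then show ?thesis
          using net_flow_at_isolated_0[of mult, OF no_out] \<open>v 0 = 0\<close> by simp
      next
        case (Suc u')
        then show ?thesis
          using g that by (simp add: S'_def f net_flow_shift[of mult, OF no_out] unshift_shift)
      qed
      moreover have "f e = 0" if "e \<notin> mg_edges (Suc N) mult" for e
        using g that by (auto simp: S'_def f unshift_def shift_in_edges inv_f_f[OF inj_shift_edge])
      ultimately show "f \<in> S"
        by (simp add: S_def)
    qed
  qed
  then show ?thesis
    unfolding kostant_def S_def S'_def by (rule bij_betw_same_card)
qed

lemma k_mult_Suc_Suc:
  assumes "0 < m" "0 < i"
  shows "k_mult m a b c (Suc i) (Suc j) = k_mult (m - 1) a' b c i j"
  using assms by (auto simp: k_mult_def)

theorem proposition5p6: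
  fixes b n c :: nat and a :: "nat \<Rightarrow> int"
  assumes "b > 0" and "n > 0"
  shows "K_k n 1 b c
           (\<lambda>j. if j \<le> 1 then 0 else if j \<le> n then a j
                 else if j = n + 1 then - (\<Sum>i=2..n. a i) else 0)
       = K_k (n - 1) (c + 1) b c
           (\<lambda>j. if j = 0 then 0 else if j \<le> n - 1 then a (j + 1)
                 else if j = n then - (\<Sum>i=2..n. a i) else 0)"
    (is "K_k n 1 b c ?v = K_k (n - 1) (c + 1) b c ?w")
proof -
  let ?mult = "k_mult n 1 b c" and ?mult' = "k_mult (n - 1) (c + 1) b c"
  have "K_k n 1 b c ?v = kostant (Suc n) ?mult ?v"
    by (simp add: K_k_def)
  also have "\<dots> = kostant (Suc n) (\<lambda>i j. if 2 \<le> i then ?mult i j else 0) ?v"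
    by (rule kostant_drop_low_tails) simp
  also have "\<dots> = kostant n (\<lambda>i j. if 2 \<le> Suc i then ?mult (Suc i) (Suc j) else 0)
                               (\<lambda>u. ?v (Suc u))"
    by (rule kostant_shift) auto
  also have "\<dots> = kostant n (\<lambda>i j. if 1 \<le> i then ?mult' i j else 0) ?w"
    using \<open>n > 0\<close> k_mult_Suc_Suc[of n]
    by (intro arg_cong2[where f = "kostant n"]) (auto simp: fun_eq_iff)
  also have "\<dots> = kostant n ?mult' ?w"
    by (rule kostant_drop_low_tails[symmetric]) simp
  also have "\<dots> = K_k (n - 1) (c + 1) b c ?w"
    using \<open>n > 0\<close> by (simp add: K_k_def)
  finally show ?thesis .
qed

end
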